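(* Let $(\mathcal{S},\widehat{\mathcal{S}},\sigma,\tau,\iota)$ be a duplicated category of sets. Then for every object $X$ of $\mathcal{S}$ the component $\iota_X:\sigma(X)\to\tau(X)$ is a monomorphism in $\widehat{\mathcal{S}}$.
   Context: A duplicated category of sets is a quintet $(\mathcal{S},\widehat{\mathcal{S}},\sigma,\tau,\iota)$ such that: (i) $\mathcal{S}$ and $\widehat{\mathcal{S}}$ are categories satisfying Lawvere's axioms of the Elementary Theory of the Category of Sets (ETCS), i.e. each is a well-pointed topos with a natural numbers object satisfying the axiom of choice; (ii) $\sigma:\mathcal{S}\to\widehat{\mathcal{S}}$ is a functor preserving all finite limits, the subobject classifier $2$, exponentials and natural numbers objects; (iii) $\tau:\mathcal{S}\to\widehat{\mathcal{S}}$ is a functor preserving all finite limits; (iv) $\iota:\sigma\to\tau$ is a natural transformation such that $\iota_X=\mathrm{id}_{\sigma(X)}=\mathrm{id}_{\tau(X)}$ for every finite object $X$ of $\mathcal{S}$. *)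

theory Defs
  imports Main
begin

record ('o, 'a) cat =
  Ob  :: "'o set"
  Ar  :: "'a set"
  Dm  :: "'a \<Rightarrow> 'o"
  Cd  :: "'a \<Rightarrow> 'o"
  Ide :: "'o \<Rightarrow> 'a"
  Cmp :: "'a \<Rightarrow> 'a \<Rightarrow> 'a"   \<comment> \<open>Cmp C g f = g o f (f first)\<close>

definition hom :: "('o, 'a) cat \<Rightarrow> 'o \<Rightarrow> 'o \<Rightarrow> 'a set" where
  "hom C A B = {f \<in> Ar C. Dm C f = A \<and> Cd C f = B}"

definition category :: "('o, 'a) cat \<Rightarrow> bool" where
  "category C \<longleftrightarrow>
     (\<forall>f \<in> Ar C. Dm C f \<in> Ob C \<and> Cd C f \<in> Ob C) \<and>
     (\<forall>A \<in> Ob C. Ide C A \<in> hom C A A) \<and>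
     (\<forall>f \<in> Ar C. \<forall>g \<in> Ar C. Cd C f = Dm C g \<longrightarrow> Cmp C g f \<in> hom C (Dm C f) (Cd C g)) \<and>
     (\<forall>f \<in> Ar C. Cmp C (Ide C (Cd C f)) f = f \<and> Cmp C f (Ide C (Dm C f)) = f) \<and>
     (\<forall>f \<in> Ar C. \<forall>g \<in> Ar C. \<forall>h \<in> Ar C. Cd C f = Dm C g \<longrightarrow> Cd C g = Dm C h \<longrightarrow>
        Cmp C h (Cmp C g f) = Cmp C (Cmp C h g) f)"

definition monic :: "('o, 'a) cat \<Rightarrow> 'a \<Rightarrow> bool" where
  "monic C m \<longleftrightarrow> m \<in> Ar C \<and>
     (\<forall>f \<in> Ar C. \<forall>g \<in> Ar C. Dm C f = Dm C g \<longrightarrow> Cd C f = Dm C m \<longrightarrow> Cd C g = Dm C m \<longrightarrow>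
        Cmp C m f = Cmp C m g \<longrightarrow> f = g)"

definition epi :: "('o, 'a) cat \<Rightarrow> 'a \<Rightarrow> bool" where
  "epi C e \<longleftrightarrow> e \<in> Ar C \<and>
     (\<forall>f \<in> Ar C. \<forall>g \<in> Ar C. Cd C f = Cd C g \<longrightarrow> Dm C f = Cd C e \<longrightarrow> Dm C g = Cd C e \<longrightarrow>
        Cmp C f e = Cmp C g e \<longrightarrow> f = g)"

definition iso :: "('o, 'a) cat \<Rightarrow> 'a \<Rightarrow> bool" where
  "iso C f \<longleftrightarrow> f \<in> Ar C \<and> (\<exists>g \<in> hom C (Cd C f) (Dm C f).
      Cmp C g f = Ide C (Dm C f) \<and> Cmp C f g = Ide C (Cd C f))"

definition terminal :: "('o, 'a) cat \<Rightarrow> 'o \<Rightarrow> bool" where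
  "terminal C T \<longleftrightarrow> T \<in> Ob C \<and> (\<forall>X \<in> Ob C. \<exists>!f. f \<in> hom C X T)"

definition initial :: "('o, 'a) cat \<Rightarrow> 'o \<Rightarrow> bool" where
  "initial C I \<longleftrightarrow> I \<in> Ob C \<and> (\<forall>X \<in> Ob C. \<exists>!f. f \<in> hom C I X)"

definition product :: "('o, 'a) cat \<Rightarrow> 'o \<Rightarrow> 'o \<Rightarrow> 'o \<Rightarrow> 'a \<Rightarrow> 'a \<Rightarrow> bool" where
  "product C A B P p1 p2 \<longleftrightarrow> p1 \<in> hom C P A \<and> p2 \<in> hom C P B \<and>
     (\<forall>X f g. f \<in> hom C X A \<longrightarrow> g \<in> hom C X B \<longrightarrow>
        (\<exists>!h. h \<in> hom C X P \<and> Cmp C p1 h = f \<and> Cmp C p2 h = g))"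

definition equalizer :: "('o, 'a) cat \<Rightarrow> 'a \<Rightarrow> 'a \<Rightarrow> 'o \<Rightarrow> 'a \<Rightarrow> bool" where
  "equalizer C f g E e \<longleftrightarrow> f \<in> Ar C \<and> g \<in> hom C (Dm C f) (Cd C f) \<and>
     e \<in> hom C E (Dm C f) \<and> Cmp C f e = Cmp C g e \<and>
     (\<forall>X h. h \<in> hom C X (Dm C f) \<longrightarrow> Cmp C f h = Cmp C g h \<longrightarrow>
        (\<exists>!k. k \<in> hom C X E \<and> Cmp C e k = h))"

definition pullback :: "('o, 'a) cat \<Rightarrow> 'a \<Rightarrow> 'a \<Rightarrow> 'o \<Rightarrow> 'a \<Rightarrow> 'a \<Rightarrow> bool" where
  "pullback C f g P p q \<longleftrightarrow> f \<in> Ar C \<and> g \<in> Ar C \<and> Cd C f = Cd C g \<and>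
     p \<in> hom C P (Dm C f) \<and> q \<in> hom C P (Dm C g) \<and> Cmp C f p = Cmp C g q \<and>
     (\<forall>X u v. u \<in> hom C X (Dm C f) \<longrightarrow> v \<in> hom C X (Dm C g) \<longrightarrow> Cmp C f u = Cmp C g v \<longrightarrow>
        (\<exists>!k. k \<in> hom C X P \<and> Cmp C p k = u \<and> Cmp C q k = v))"

definition has_finite_limits :: "('o, 'a) cat \<Rightarrow> bool" where
  "has_finite_limits C \<longleftrightarrow> (\<exists>T. terminal C T) \<and>
     (\<forall>A \<in> Ob C. \<forall>B \<in> Ob C. \<exists>P p1 p2. product C A B P p1 p2) \<and>
     (\<forall>f \<in> Ar C. \<forall>g \<in> hom C (Dm C f) (Cd C f). \<exists>E e. equalizer C f g E e)"

text \<open>E = B^A with evaluation ev : E x A -> B, where (P, p1, p2) is a product of E and A.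
  Transposition: for every product (Q, q1, q2) of X and A and every f : Q -> B there is a
  unique h : X -> E with ev o (h x id_A) = f.\<close>
definition exponential :: "('o, 'a) cat \<Rightarrow> 'o \<Rightarrow> 'o \<Rightarrow> 'o \<Rightarrow> 'a \<Rightarrow> 'o \<Rightarrow> 'a \<Rightarrow> 'a \<Rightarrow> bool" where
  "exponential C A B E ev P p1 p2 \<longleftrightarrow> product C E A P p1 p2 \<and> ev \<in> hom C P B \<and>
     (\<forall>X Q q1 q2 f. product C X A Q q1 q2 \<longrightarrow> f \<in> hom C Q B \<longrightarrow>
        (\<exists>!h. h \<in> hom C X E \<and>
           (\<forall>k \<in> hom C Q P. Cmp C p1 k = Cmp C h q1 \<and> Cmp C p2 k = q2 \<longrightarrow> Cmp C ev k = f)))"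

definition cartesian_closed :: "('o, 'a) cat \<Rightarrow> bool" where
  "cartesian_closed C \<longleftrightarrow>
     (\<forall>A \<in> Ob C. \<forall>B \<in> Ob C. \<exists>E ev P p1 p2. exponential C A B E ev P p1 p2)"

definition subobject_classifier :: "('o, 'a) cat \<Rightarrow> 'o \<Rightarrow> 'o \<Rightarrow> 'a \<Rightarrow> bool" where
  "subobject_classifier C One Om tr \<longleftrightarrow> terminal C One \<and> tr \<in> hom C One Om \<and>
     (\<forall>m. monic C m \<longrightarrow>
        (\<exists>!\<chi>. \<chi> \<in> hom C (Cd C m) Om \<and>
           (\<exists>u \<in> hom C (Dm C m) One. pullback C \<chi> tr (Dm C m) m u)))"

definition nno :: "('o, 'a) cat \<Rightarrow> 'o \<Rightarrow> 'o \<Rightarrow> 'a \<Rightarrow> 'a \<Rightarrow> bool" where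
  "nno C One N z s \<longleftrightarrow> terminal C One \<and> z \<in> hom C One N \<and> s \<in> hom C N N \<and>
     (\<forall>X x f. x \<in> hom C One X \<longrightarrow> f \<in> hom C X X \<longrightarrow>
        (\<exists>!h. h \<in> hom C N X \<and> Cmp C h z = x \<and> Cmp C h s = Cmp C f h))"

definition topos :: "('o, 'a) cat \<Rightarrow> bool" where
  "topos C \<longleftrightarrow> category C \<and> has_finite_limits C \<and> cartesian_closed C \<and>
     (\<exists>One Om tr. subobject_classifier C One Om tr)"

definition well_pointed :: "('o, 'a) cat \<Rightarrow> bool" where
  "well_pointed C \<longleftrightarrow> (\<forall>One. terminal C One \<longrightarrow>
     \<not> initial C One \<and>
     (\<forall>X \<in> Ob C. \<forall>Y \<in> Ob C. \<forall>f \<in> hom C X Y. \<forall>g \<in> hom C X Y.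
        (\<forall>x \<in> hom C One X. Cmp C f x = Cmp C g x) \<longrightarrow> f = g))"

definition axiom_of_choice :: "('o, 'a) cat \<Rightarrow> bool" where
  "axiom_of_choice C \<longleftrightarrow>
     (\<forall>e. epi C e \<longrightarrow> (\<exists>s \<in> hom C (Cd C e) (Dm C e). Cmp C e s = Ide C (Cd C e)))"

definition ETCS :: "('o, 'a) cat \<Rightarrow> bool" where
  "ETCS C \<longleftrightarrow> topos C \<and> well_pointed C \<and> (\<exists>One N z s. nno C One N z s) \<and>
     axiom_of_choice C"

text \<open>Finite object (Dedekind): every monomorphism X -> X is an isomorphism.
  In ETCS (with choice) this agrees with the other usual notions of finiteness.\<close>
definition finite_object :: "('o, 'a) cat \<Rightarrow> 'o \<Rightarrow> bool" where
  "finite_object C X \<longleftrightarrow> X \<in> Ob C \<and> (\<forall>m \<in> hom C X X. monic C m \<longrightarrow> iso C m)"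

definition is_functor :: "('o, 'a) cat \<Rightarrow> ('p, 'b) cat \<Rightarrow> ('o \<Rightarrow> 'p) \<Rightarrow> ('a \<Rightarrow> 'b) \<Rightarrow> bool" where
  "is_functor C D FO FA \<longleftrightarrow>
     (\<forall>A \<in> Ob C. FO A \<in> Ob D) \<and>
     (\<forall>f \<in> Ar C. FA f \<in> hom D (FO (Dm C f)) (FO (Cd C f))) \<and>
     (\<forall>A \<in> Ob C. FA (Ide C A) = Ide D (FO A)) \<and>
     (\<forall>f \<in> Ar C. \<forall>g \<in> Ar C. Cd C f = Dm C g \<longrightarrow> FA (Cmp C g f) = Cmp D (FA g) (FA f))"

definition preserves_finite_limits ::
  "('o, 'a) cat \<Rightarrow> ('p, 'b) cat \<Rightarrow> ('o \<Rightarrow> 'p) \<Rightarrow> ('a \<Rightarrow> 'b) \<Rightarrow> bool" where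
  "preserves_finite_limits C D FO FA \<longleftrightarrow>
     (\<forall>T. terminal C T \<longrightarrow> terminal D (FO T)) \<and>
     (\<forall>A B P p1 p2. product C A B P p1 p2 \<longrightarrow> product D (FO A) (FO B) (FO P) (FA p1) (FA p2)) \<and>
     (\<forall>f g E e. equalizer C f g E e \<longrightarrow> equalizer D (FA f) (FA g) (FO E) (FA e))"

definition preserves_subobject_classifier ::
  "('o, 'a) cat \<Rightarrow> ('p, 'b) cat \<Rightarrow> ('o \<Rightarrow> 'p) \<Rightarrow> ('a \<Rightarrow> 'b) \<Rightarrow> bool" where
  "preserves_subobject_classifier C D FO FA \<longleftrightarrow>
     (\<forall>One Om tr. subobject_classifier C One Om tr \<longrightarrow>
        subobject_classifier D (FO One) (FO Om) (FA tr))"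

definition preserves_exponentials ::
  "('o, 'a) cat \<Rightarrow> ('p, 'b) cat \<Rightarrow> ('o \<Rightarrow> 'p) \<Rightarrow> ('a \<Rightarrow> 'b) \<Rightarrow> bool" where
  "preserves_exponentials C D FO FA \<longleftrightarrow>
     (\<forall>A B E ev P p1 p2. exponential C A B E ev P p1 p2 \<longrightarrow>
        exponential D (FO A) (FO B) (FO E) (FA ev) (FO P) (FA p1) (FA p2))"

definition preserves_nno ::
  "('o, 'a) cat \<Rightarrow> ('p, 'b) cat \<Rightarrow> ('o \<Rightarrow> 'p) \<Rightarrow> ('a \<Rightarrow> 'b) \<Rightarrow> bool" where
  "preserves_nno C D FO FA \<longleftrightarrow>
     (\<forall>One N z s. nno C One N z s \<longrightarrow> nno D (FO One) (FO N) (FA z) (FA s))"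

definition nat_trans ::
  "('o, 'a) cat \<Rightarrow> ('p, 'b) cat \<Rightarrow> ('o \<Rightarrow> 'p) \<Rightarrow> ('a \<Rightarrow> 'b) \<Rightarrow> ('o \<Rightarrow> 'p) \<Rightarrow> ('a \<Rightarrow> 'b)
     \<Rightarrow> ('o \<Rightarrow> 'b) \<Rightarrow> bool" where
  "nat_trans C D FO FA GO GA \<eta> \<longleftrightarrow>
     (\<forall>X \<in> Ob C. \<eta> X \<in> hom D (FO X) (GO X)) \<and>
     (\<forall>f \<in> Ar C. Cmp D (GA f) (\<eta> (Dm C f)) = Cmp D (\<eta> (Cd C f)) (FA f))"

definition duplicated_category_of_sets ::
  "('o, 'a) cat \<Rightarrow> ('p, 'b) cat \<Rightarrow> ('o \<Rightarrow> 'p) \<Rightarrow> ('a \<Rightarrow> 'b) \<Rightarrow> ('o \<Rightarrow> 'p) \<Rightarrow> ('a \<Rightarrow> 'b)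
     \<Rightarrow> ('o \<Rightarrow> 'b) \<Rightarrow> bool" where
  "duplicated_category_of_sets S S' \<sigma>O \<sigma>A \<tau>O \<tau>A \<iota> \<longleftrightarrow>
     ETCS S \<and> ETCS S' \<and>
     is_functor S S' \<sigma>O \<sigma>A \<and> preserves_finite_limits S S' \<sigma>O \<sigma>A \<and>
     preserves_subobject_classifier S S' \<sigma>O \<sigma>A \<and> preserves_exponentials S S' \<sigma>O \<sigma>A \<and>
     preserves_nno S S' \<sigma>O \<sigma>A \<and>
     is_functor S S' \<tau>O \<tau>A \<and> preserves_finite_limits S S' \<tau>O \<tau>A \<and>
     nat_trans S S' \<sigma>O \<sigma>A \<tau>O \<tau>A \<iota> \<and>
     (\<forall>X. finite_object S X \<longrightarrow>
        \<sigma>O X = \<tau>O X \<and> \<iota> X = Ide S' (\<sigma>O X) \<and> \<iota> X = Ide S' (\<tau>O X))"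

end

theory Submission
  imports Defs
begin

text \<open>In an ETCS category the subobject classifier \<open>\<Omega>\<close> has at most two global elements, so
  it is a finite object and \<open>\<iota>\<^sub>\<Omega>\<close> is an identity. The diagonal of \<open>X\<close> is the equalizer
  of its characteristic map \<open>\<chi> : X \<times> X \<rightarrow> \<Omega>\<close> and \<open>true \<circ> !\<close>, and \<open>\<sigma>\<close> preserves this equalizer.
  If \<open>\<iota>\<^sub>X \<circ> f = \<iota>\<^sub>X \<circ> g\<close>, naturality of \<open>\<iota>\<close> at \<open>\<chi>\<close> (where \<open>\<iota>\<^sub>\<Omega> = id\<close>) shows that \<open>\<langle>f, g\<rangle>\<close>
  equalizes \<open>\<sigma>\<chi>\<close> and \<open>\<sigma>(true \<circ> !)\<close>, hence factors through the diagonal of \<open>\<sigma>X\<close>, so \<open>f = g\<close>.\<close>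

section \<open>Elementary category theory\<close>

lemma comp_in_hom:
  "category C \<Longrightarrow> f \<in> hom C A B \<Longrightarrow> g \<in> hom C B D \<Longrightarrow> Cmp C g f \<in> hom C A D"
  unfolding category_def hom_def by auto

lemma comp_assoc:
  "category C \<Longrightarrow> f \<in> hom C A B \<Longrightarrow> g \<in> hom C B D \<Longrightarrow> h \<in> hom C D E \<Longrightarrow>
   Cmp C h (Cmp C g f) = Cmp C (Cmp C h g) f"
  unfolding category_def hom_def by auto

lemma comp_ide_left: "category C \<Longrightarrow> f \<in> hom C A B \<Longrightarrow> Cmp C (Ide C B) f = f"
  unfolding category_def hom_def by auto

lemma comp_ide_right: "category C \<Longrightarrow> f \<in> hom C A B \<Longrightarrow> Cmp C f (Ide C A) = f"
  unfolding category_def hom_def by auto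

lemma ide_in_hom: "category C \<Longrightarrow> A \<in> Ob C \<Longrightarrow> Ide C A \<in> hom C A A"
  unfolding category_def by auto

lemma hom_objects: "category C \<Longrightarrow> f \<in> hom C A B \<Longrightarrow> A \<in> Ob C \<and> B \<in> Ob C"
  unfolding category_def hom_def by auto

lemma terminal_in_Ob: "terminal C T \<Longrightarrow> T \<in> Ob C"
  unfolding terminal_def by auto

lemma terminal_arrow_unique:
  "category C \<Longrightarrow> terminal C T \<Longrightarrow> f \<in> hom C X T \<Longrightarrow> g \<in> hom C X T \<Longrightarrow> f = g"
  unfolding terminal_def by (metis hom_objects)

lemma terminal_arrow_exists: "terminal C T \<Longrightarrow> X \<in> Ob C \<Longrightarrow> \<exists>f. f \<in> hom C X T"
  unfolding terminal_def by auto

lemma terminal_arrow_ide: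
  "category C \<Longrightarrow> terminal C T \<Longrightarrow> f \<in> hom C T T \<Longrightarrow> f = Ide C T"
  using terminal_arrow_unique ide_in_hom terminal_in_Ob by metis

lemma comp_through_terminal:
  assumes C: "category C" and t: "terminal C One"
    and u: "u \<in> hom C X One" and x: "x \<in> hom C One X" and p: "p \<in> hom C One Y"
  shows "Cmp C (Cmp C p u) x = p"
proof -
  have ux: "Cmp C u x = Ide C One" using terminal_arrow_ide[OF C t comp_in_hom[OF C x u]] .
  have "Cmp C (Cmp C p u) x = Cmp C p (Cmp C u x)" using comp_assoc[OF C x u p] by simp
  also have "\<dots> = p" using ux comp_ide_right[OF C p] by simp
  finally show ?thesis .
qed

lemma points_eq_if_cone_has_point:
  assumes C: "category C" and t: "terminal C One"
    and p: "p \<in> hom C One Om" and q: "q \<in> hom C One Om"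
    and u: "u \<in> hom C X One" and v: "v \<in> hom C X One" and eq: "Cmp C p u = Cmp C q v"
    and x: "x \<in> hom C One X"
  shows "p = q"
  using comp_through_terminal[OF C t u x p] comp_through_terminal[OF C t v x q] eq by simp

lemma monicI:
  assumes "m \<in> hom C A B"
    and "\<And>Z f g. f \<in> hom C Z A \<Longrightarrow> g \<in> hom C Z A \<Longrightarrow> Cmp C m f = Cmp C m g \<Longrightarrow> f = g"
  shows "monic C m"
  using assms unfolding monic_def hom_def by (metis (mono_tags, lifting) mem_Collect_eq)

lemma monicD:
  "monic C m \<Longrightarrow> m \<in> hom C A B \<Longrightarrow> f \<in> hom C Z A \<Longrightarrow> g \<in> hom C Z A \<Longrightarrow>
   Cmp C m f = Cmp C m g \<Longrightarrow> f = g"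
  unfolding monic_def hom_def by auto

lemma section_monic:
  assumes C: "category C" and m: "m \<in> hom C A B" and r: "r \<in> hom C B A"
    and rm: "Cmp C r m = Ide C A"
  shows "monic C m"
proof (rule monicI[OF m])
  fix Z f g assume f: "f \<in> hom C Z A" and g: "g \<in> hom C Z A" and mfg: "Cmp C m f = Cmp C m g"
  have "f = Cmp C (Cmp C r m) f" using rm comp_ide_left[OF C f] by simp
  also have "\<dots> = Cmp C (Cmp C r m) g" using mfg comp_assoc[OF C f m r] comp_assoc[OF C g m r] by simp
  also have "\<dots> = g" using rm comp_ide_left[OF C g] by simp
  finally show "f = g" .
qed

lemma isoI:
  "m \<in> hom C A B \<Longrightarrow> k \<in> hom C B A \<Longrightarrow> Cmp C k m = Ide C A \<Longrightarrow> Cmp C m k = Ide C B \<Longrightarrow> iso C m"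
  unfolding iso_def hom_def by auto

lemma well_pointed_ext:
  assumes "well_pointed C" "terminal C One" "category C" "f \<in> hom C X Y" "g \<in> hom C X Y"
    and "\<And>x. x \<in> hom C One X \<Longrightarrow> Cmp C f x = Cmp C g x"
  shows "f = g"
  using assms hom_objects[OF assms(3,4)] unfolding well_pointed_def by blast

lemma product_projections: "product C A B P p1 p2 \<Longrightarrow> p1 \<in> hom C P A \<and> p2 \<in> hom C P B"
  unfolding product_def by blast

lemma product_pair:
  "product C A B P p1 p2 \<Longrightarrow> f \<in> hom C X A \<Longrightarrow> g \<in> hom C X B \<Longrightarrow>
   \<exists>h \<in> hom C X P. Cmp C p1 h = f \<and> Cmp C p2 h = g"
  unfolding product_def by blast

lemma product_arrow_eqI:
  assumes C: "category C" and pr: "product C A B P p1 p2" and h: "h \<in> hom C X P" "h' \<in> hom C X P"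
    and eq: "Cmp C p1 h = Cmp C p1 h'" "Cmp C p2 h = Cmp C p2 h'"
  shows "h = h'"
proof -
  have "Cmp C p1 h \<in> hom C X A" "Cmp C p2 h \<in> hom C X B"
    using comp_in_hom[OF C h(1)] product_projections[OF pr] by auto
  then show ?thesis using pr h eq unfolding product_def by metis
qed

lemma equalizer_arrow: "equalizer C f g E e \<Longrightarrow> e \<in> hom C E (Dm C f) \<and> Cmp C f e = Cmp C g e"
  unfolding equalizer_def by blast

lemma equalizer_factor:
  "equalizer C f g E e \<Longrightarrow> h \<in> hom C X (Dm C f) \<Longrightarrow> Cmp C f h = Cmp C g h \<Longrightarrow>
   \<exists>k \<in> hom C X E. Cmp C e k = h"
  unfolding equalizer_def by blast

lemma equalizer_unique:
  assumes "equalizer C f g E e" "h \<in> hom C X (Dm C f)" "Cmp C f h = Cmp C g h"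
  shows "\<exists>!k. k \<in> hom C X E \<and> Cmp C e k = h"
proof -
  have "\<forall>X h. h \<in> hom C X (Dm C f) \<longrightarrow> Cmp C f h = Cmp C g h \<longrightarrow>
        (\<exists>!k. k \<in> hom C X E \<and> Cmp C e k = h)"
    using assms(1) unfolding equalizer_def by (elim conjE)
  then show ?thesis using assms(2,3) by simp
qed

lemma equalizer_monic:
  assumes C: "category C" and eq: "equalizer C f g E e"
  shows "monic C e"
proof -
  have e: "e \<in> hom C E (Dm C f)" and fe: "Cmp C f e = Cmp C g e"
    using equalizer_arrow[OF eq] by auto
  have "f \<in> Ar C" and g: "g \<in> hom C (Dm C f) (Cd C f)"
    using eq unfolding equalizer_def by blast+
  then have f: "f \<in> hom C (Dm C f) (Cd C f)" by (simp add: hom_def)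
  show ?thesis
  proof (rule monicI[OF e])
    fix Z x y assume x: "x \<in> hom C Z E" and y: "y \<in> hom C Z E" and exy: "Cmp C e x = Cmp C e y"
    have ex: "Cmp C e x \<in> hom C Z (Dm C f)" using comp_in_hom[OF C x e] .
    have "Cmp C f (Cmp C e x) = Cmp C g (Cmp C e x)"
      using comp_assoc[OF C x e f] comp_assoc[OF C x e g] fe by simp
    then have "\<exists>!k. k \<in> hom C Z E \<and> Cmp C e k = Cmp C e x"
      by (rule equalizer_unique[OF eq ex])
    then show "x = y" using x y exy by (metis (no_types, lifting))
  qed
qed

lemma equalizerI:
  assumes f: "f \<in> hom C A B" and g: "g \<in> hom C A B" and e: "monic C e" "e \<in> hom C E A"
    and fe: "Cmp C f e = Cmp C g e"
    and factor: "\<And>X h. h \<in> hom C X A \<Longrightarrow> Cmp C f h = Cmp C g h \<Longrightarrow> \<exists>k \<in> hom C X E. Cmp C e k = h"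
  shows "equalizer C f g E e"
  unfolding equalizer_def
proof (intro conjI allI impI)
  have A: "Dm C f = A" and B: "Cd C f = B" using f by (simp_all add: hom_def)
  show "f \<in> Ar C" using f by (simp add: hom_def)
  show "g \<in> hom C (Dm C f) (Cd C f)" "e \<in> hom C E (Dm C f)" using g e(2) A B by simp_all
  show "Cmp C f e = Cmp C g e" by (rule fe)
  fix X h assume "h \<in> hom C X (Dm C f)" and fh: "Cmp C f h = Cmp C g h"
  then have h: "h \<in> hom C X A" using A by simp
  obtain k where k: "k \<in> hom C X E" "Cmp C e k = h" using factor[OF h fh] by (elim bexE)
  show "\<exists>!k. k \<in> hom C X E \<and> Cmp C e k = h"
  proof (rule ex1I)
    show "k \<in> hom C X E \<and> Cmp C e k = h" using k by (rule conjI)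
    fix k' assume "k' \<in> hom C X E \<and> Cmp C e k' = h"
    then show "k' = k" using monicD[OF e _ k(1)] k(2) by (elim conjE) simp
  qed
qed

lemma pullback_commutes: "pullback C f g P p q \<Longrightarrow> Cmp C f p = Cmp C g q"
  unfolding pullback_def by blast

lemma pullback_factor:
  assumes "pullback C f g P p q" "f \<in> hom C A Z" "g \<in> hom C B Z"
    and "u \<in> hom C X A" "v \<in> hom C X B" "Cmp C f u = Cmp C g v"
  shows "\<exists>k \<in> hom C X P. Cmp C p k = u \<and> Cmp C q k = v"
proof -
  have "u \<in> hom C X (Dm C f)" "v \<in> hom C X (Dm C g)" using assms(2-5) by (auto simp: hom_def)
  then show ?thesis using assms(1,6) unfolding pullback_def by blast
qed

lemma pullback_monicI:
  assumes f: "f \<in> hom C A Z" and g: "g \<in> hom C B Z"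
    and p: "monic C p" "p \<in> hom C P A" and q: "q \<in> hom C P B" and fg: "Cmp C f p = Cmp C g q"
    and factor: "\<And>X u v. u \<in> hom C X A \<Longrightarrow> v \<in> hom C X B \<Longrightarrow> Cmp C f u = Cmp C g v \<Longrightarrow>
       \<exists>k \<in> hom C X P. Cmp C p k = u \<and> Cmp C q k = v"
  shows "pullback C f g P p q"
  unfolding pullback_def
proof (intro conjI allI impI)
  have A: "Dm C f = A" and B: "Dm C g = B" using f g by (simp_all add: hom_def)
  show "f \<in> Ar C" "g \<in> Ar C" "Cd C f = Cd C g" using f g by (simp_all add: hom_def)
  show "p \<in> hom C P (Dm C f)" "q \<in> hom C P (Dm C g)" using p(2) q A B by simp_all
  show "Cmp C f p = Cmp C g q" by (rule fg)
  fix X u v assume "u \<in> hom C X (Dm C f)" "v \<in> hom C X (Dm C g)" and fuv: "Cmp C f u = Cmp C g v"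
  then have u: "u \<in> hom C X A" and v: "v \<in> hom C X B" using A B by simp_all
  obtain k where k: "k \<in> hom C X P" "Cmp C p k = u" "Cmp C q k = v"
    using factor[OF u v fuv] by blast
  show "\<exists>!k. k \<in> hom C X P \<and> Cmp C p k = u \<and> Cmp C q k = v"
  proof (rule ex1I)
    show "k \<in> hom C X P \<and> Cmp C p k = u \<and> Cmp C q k = v" using k by simp
    fix k' assume "k' \<in> hom C X P \<and> Cmp C p k' = u \<and> Cmp C q k' = v"
    then show "k' = k" using monicD[OF p _ k(1)] k(2) by simp
  qed
qed

lemma functor_hom: "is_functor C D FO FA \<Longrightarrow> f \<in> hom C A B \<Longrightarrow> FA f \<in> hom D (FO A) (FO B)"
  unfolding is_functor_def hom_def by auto

lemma functor_comp:
  "is_functor C D FO FA \<Longrightarrow> f \<in> hom C A B \<Longrightarrow> g \<in> hom C B E \<Longrightarrow>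
   FA (Cmp C g f) = Cmp D (FA g) (FA f)"
  unfolding is_functor_def hom_def by auto

lemma functor_ide: "is_functor C D FO FA \<Longrightarrow> A \<in> Ob C \<Longrightarrow> FA (Ide C A) = Ide D (FO A)"
  unfolding is_functor_def by auto

lemma preserves_product:
  "preserves_finite_limits C D FO FA \<Longrightarrow> product C A B P p1 p2 \<Longrightarrow>
   product D (FO A) (FO B) (FO P) (FA p1) (FA p2)"
  unfolding preserves_finite_limits_def by blast

lemma preserves_equalizer:
  "preserves_finite_limits C D FO FA \<Longrightarrow> equalizer C f g E e \<Longrightarrow>
   equalizer D (FA f) (FA g) (FO E) (FA e)"
  unfolding preserves_finite_limits_def by blast

lemma nat_trans_hom: "nat_trans C D FO FA GO GA \<eta> \<Longrightarrow> X \<in> Ob C \<Longrightarrow> \<eta> X \<in> hom D (FO X) (GO X)"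
  unfolding nat_trans_def by auto

lemma nat_trans_naturality:
  "nat_trans C D FO FA GO GA \<eta> \<Longrightarrow> f \<in> hom C A B \<Longrightarrow> Cmp D (GA f) (\<eta> A) = Cmp D (\<eta> B) (FA f)"
  unfolding nat_trans_def hom_def by auto

section \<open>The subobject classifier of a well-pointed topos\<close>

lemma classifier_exists:
  assumes "subobject_classifier C One Om tr" "monic C m" "m \<in> hom C A B"
  obtains \<chi> u where "\<chi> \<in> hom C B Om" "u \<in> hom C A One" "pullback C \<chi> tr A m u"
proof -
  have "Dm C m = A" "Cd C m = B" using assms(3) by (simp_all add: hom_def)
  then show ?thesis using assms(1,2) that unfolding subobject_classifier_def by metis
qed

lemma classifier_unique:
  assumes cl: "subobject_classifier C One Om tr" and m: "monic C m" "m \<in> hom C A B"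
    and "\<chi> \<in> hom C B Om" "\<chi>' \<in> hom C B Om" "u \<in> hom C A One" "u' \<in> hom C A One"
    and "pullback C \<chi> tr A m u" "pullback C \<chi>' tr A m u'"
  shows "\<chi> = \<chi>'"
proof -
  have "Dm C m = A" "Cd C m = B" using m(2) by (simp_all add: hom_def)
  then have "\<exists>!\<chi>. \<chi> \<in> hom C B Om \<and> (\<exists>u \<in> hom C A One. pullback C \<chi> tr A m u)"
    using cl m(1) unfolding subobject_classifier_def by metis
  then show ?thesis using assms(4-) by blast
qed

lemma classified_monic_equalizer:
  assumes C: "category C" and t: "terminal C One" and tr: "tr \<in> hom C One Om"
    and m: "monic C m" "m \<in> hom C A B" and \<chi>: "\<chi> \<in> hom C B Om"
    and pb: "pullback C \<chi> tr A m u" and u: "u \<in> hom C A One" and b: "b \<in> hom C B One"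
  shows "equalizer C \<chi> (Cmp C tr b) A m"
proof (rule equalizerI[OF \<chi> comp_in_hom[OF C b tr] m])
  have "Cmp C b m = u" using terminal_arrow_unique[OF C t comp_in_hom[OF C m(2) b] u] .
  then show "Cmp C \<chi> m = Cmp C (Cmp C tr b) m"
    using pullback_commutes[OF pb] comp_assoc[OF C m(2) b tr] by simp
  fix X h assume h: "h \<in> hom C X B" and eq: "Cmp C \<chi> h = Cmp C (Cmp C tr b) h"
  have "Cmp C \<chi> h = Cmp C tr (Cmp C b h)" using eq comp_assoc[OF C h b tr] by simp
  from pullback_factor[OF pb \<chi> tr h comp_in_hom[OF C h b] this]
  show "\<exists>k \<in> hom C X A. Cmp C m k = h" by blast
qed

lemma diagonal_equalizer:
  assumes C: "category C" and fl: "has_finite_limits C" and cl: "subobject_classifier C One Om tr"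
    and X: "X \<in> Ob C"
  obtains P \<pi>1 \<pi>2 d \<chi> b where "product C X X P \<pi>1 \<pi>2" "d \<in> hom C X P"
    "Cmp C \<pi>1 d = Ide C X" "Cmp C \<pi>2 d = Ide C X"
    "\<chi> \<in> hom C P Om" "b \<in> hom C P One" "equalizer C \<chi> (Cmp C tr b) X d"
proof -
  have t: "terminal C One" and tr: "tr \<in> hom C One Om"
    using cl unfolding subobject_classifier_def by auto
  obtain P \<pi>1 \<pi>2 where pr: "product C X X P \<pi>1 \<pi>2"
    using fl X unfolding has_finite_limits_def by blast
  have idX: "Ide C X \<in> hom C X X" by (rule ide_in_hom[OF C X])
  obtain d where d: "d \<in> hom C X P" "Cmp C \<pi>1 d = Ide C X" "Cmp C \<pi>2 d = Ide C X"
    using product_pair[OF pr idX idX] by blast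
  have m: "monic C d" using section_monic[OF C d(1) _ d(2)] product_projections[OF pr] by blast
  obtain \<chi> u where \<chi>: "\<chi> \<in> hom C P Om" and u: "u \<in> hom C X One" and pb: "pullback C \<chi> tr X d u"
    using classifier_exists[OF cl m d(1)] .
  obtain b where b: "b \<in> hom C P One"
    using terminal_arrow_exists[OF t] hom_objects[OF C d(1)] by blast
  show ?thesis
    using that[OF pr d \<chi> b classified_monic_equalizer[OF C t tr m d(1) \<chi> pb u b]] .
qed

lemma equalizer_of_point_and_true_pullback:
  assumes C: "category C" and fl: "has_finite_limits C" and t: "terminal C One"
    and p: "p \<in> hom C One Om" and tr: "tr \<in> hom C One Om"
  obtains E e where "monic C e" "e \<in> hom C E One" "pullback C p tr E e e"
proof -
  have "p \<in> Ar C" "tr \<in> hom C (Dm C p) (Cd C p)" using p tr by (simp_all add: hom_def)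
  then obtain E e where eq: "equalizer C p tr E e" using fl unfolding has_finite_limits_def by blast
  have m: "monic C e" by (rule equalizer_monic[OF C eq])
  have e: "e \<in> hom C E One" using equalizer_arrow[OF eq] p by (simp add: hom_def)
  have "pullback C p tr E e e"
  proof (rule pullback_monicI[OF p tr m e e])
    show "Cmp C p e = Cmp C tr e" using equalizer_arrow[OF eq] by simp
    fix X u v assume u: "u \<in> hom C X One" and v: "v \<in> hom C X One" and uv: "Cmp C p u = Cmp C tr v"
    have "u = v" by (rule terminal_arrow_unique[OF C t u v])
    moreover have "u \<in> hom C X (Dm C p)" using u p by (simp add: hom_def)
    ultimately show "\<exists>k \<in> hom C X E. Cmp C e k = u \<and> Cmp C e k = v"
      using equalizer_factor[OF eq] uv by auto
  qed
  then show ?thesis using m e that by blast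
qed

lemma classifier_points_eq_if_not_true:
  assumes C: "category C" and fl: "has_finite_limits C" and wp: "well_pointed C"
    and cl: "subobject_classifier C One Om tr"
    and p: "p \<in> hom C One Om" and q: "q \<in> hom C One Om" and "p \<noteq> tr" "q \<noteq> tr"
  shows "p = q"
proof -
  have t: "terminal C One" and tr: "tr \<in> hom C One Om"
    using cl unfolding subobject_classifier_def by auto
  obtain E e where m: "monic C e" and e: "e \<in> hom C E One" and pb: "pullback C p tr E e e"
    using equalizer_of_point_and_true_pullback[OF C fl t p tr] .
  \<comment> \<open>The equalizer of \<open>p\<close> and \<open>true\<close> has no global elements, so by well-pointedness it is
    also the pullback of \<open>true\<close> along \<open>q\<close>; uniqueness of characteristic maps gives \<open>p = q\<close>.\<close>
  have pointless: False if "Cmp C r u = Cmp C tr v" "r \<in> hom C One Om" "r \<noteq> tr"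
      "u \<in> hom C X One" "v \<in> hom C X One" "x \<in> hom C One X" for r u v X x
    using points_eq_if_cone_has_point[OF C t _ tr] that by metis
  have "pullback C q tr E e e"
  proof (rule pullback_monicI[OF q tr m e e])
    show "Cmp C q e = Cmp C tr e"
      using well_pointed_ext[OF wp t C comp_in_hom[OF C e q] comp_in_hom[OF C e tr]]
        pointless[OF pullback_commutes[OF pb] p \<open>p \<noteq> tr\<close> e e] by blast
    fix X u v assume u: "u \<in> hom C X One" and v: "v \<in> hom C X One" and uv: "Cmp C q u = Cmp C tr v"
    have "Cmp C p u = Cmp C tr v"
      using well_pointed_ext[OF wp t C comp_in_hom[OF C u p] comp_in_hom[OF C v tr]]
        pointless[OF uv q \<open>q \<noteq> tr\<close> u v] by blast
    then show "\<exists>k \<in> hom C X E. Cmp C e k = u \<and> Cmp C e k = v"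
      by (rule pullback_factor[OF pb p tr u v])
  qed
  then show "p = q" using classifier_unique[OF cl m e p q e e pb] by blast
qed

lemma finite_classifier_points:
  assumes C: "category C" and fl: "has_finite_limits C" and wp: "well_pointed C"
    and cl: "subobject_classifier C One Om tr"
  shows "finite (hom C One Om)"
proof (cases "hom C One Om \<subseteq> {tr}")
  case False
  then obtain p where p: "p \<in> hom C One Om" "p \<noteq> tr" by blast
  have "hom C One Om \<subseteq> {tr, p}"
    using classifier_points_eq_if_not_true[OF C fl wp cl _ p(1) _ p(2)] by blast
  then show ?thesis by (rule finite_subset) simp
next
  case True
  then show ?thesis by (rule finite_subset) simp
qed

lemma monic_endo_surj_on_points:
  assumes C: "category C" and m: "monic C m" "m \<in> hom C X X" and fin: "finite (hom C One X)"
  shows "Cmp C m ` hom C One X = hom C One X"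
proof (rule endo_inj_surj[OF fin])
  show "Cmp C m ` hom C One X \<subseteq> hom C One X" using comp_in_hom[OF C _ m(2)] by blast
  show "inj_on (Cmp C m) (hom C One X)" using monicD[OF m] by (rule inj_onI)
qed

lemma monic_iso_if_points_lift:
  assumes C: "category C" and wp: "well_pointed C" and cl: "subobject_classifier C One Om tr"
    and m: "monic C m" "m \<in> hom C A B"
    and lift: "\<And>y. y \<in> hom C One B \<Longrightarrow> \<exists>x \<in> hom C One A. y = Cmp C m x"
  shows "iso C m"
proof -
  have t: "terminal C One" and tr: "tr \<in> hom C One Om"
    using cl unfolding subobject_classifier_def by auto
  obtain \<chi> u where \<chi>: "\<chi> \<in> hom C B Om" and u: "u \<in> hom C A One" and pb: "pullback C \<chi> tr A m u"
    using classifier_exists[OF cl m] .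
  obtain b where b: "b \<in> hom C B One"
    using terminal_arrow_exists[OF t] hom_objects[OF C m(2)] by blast
  \<comment> \<open>\<open>\<chi>\<close> is \<open>true\<close> on every global element, so \<open>id\<^sub>B\<close> factors through \<open>m\<close>.\<close>
  have \<chi>_const: "\<chi> = Cmp C tr b"
  proof (rule well_pointed_ext[OF wp t C \<chi> comp_in_hom[OF C b tr]])
    fix y assume y: "y \<in> hom C One B"
    then obtain x where x: "x \<in> hom C One A" and yx: "y = Cmp C m x" using lift by blast
    have "Cmp C \<chi> y = Cmp C (Cmp C \<chi> m) x" using comp_assoc[OF C x m(2) \<chi>] yx by simp
    also have "\<dots> = tr" using pullback_commutes[OF pb] comp_through_terminal[OF C t u x tr] by simp
    also have "\<dots> = Cmp C (Cmp C tr b) y" using comp_through_terminal[OF C t b y tr] by simp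
    finally show "Cmp C \<chi> y = Cmp C (Cmp C tr b) y" .
  qed
  have idB: "Ide C B \<in> hom C B B" using ide_in_hom[OF C] hom_objects[OF C m(2)] by blast
  have "Cmp C \<chi> (Ide C B) = Cmp C tr b" using \<chi>_const comp_ide_right[OF C \<chi>] by simp
  then obtain k where k: "k \<in> hom C B A" and mk: "Cmp C m k = Ide C B"
    using pullback_factor[OF pb \<chi> tr idB b] by blast
  have "Cmp C m (Cmp C k m) = Cmp C m (Ide C A)"
    using comp_assoc[OF C m(2) k m(2)] mk comp_ide_left[OF C m(2)] comp_ide_right[OF C m(2)] by simp
  then have "Cmp C k m = Ide C A"
    using monicD[OF m comp_in_hom[OF C m(2) k] ide_in_hom[OF C]] hom_objects[OF C m(2)] by blast
  then show ?thesis using isoI[OF m(2) k _ mk] by blast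
qed

lemma classifier_finite_object:
  assumes E: "ETCS C" and cl: "subobject_classifier C One Om tr"
  shows "finite_object C Om"
proof -
  have C: "category C" and fl: "has_finite_limits C" and wp: "well_pointed C"
    using E unfolding ETCS_def topos_def by auto
  have fin: "finite (hom C One Om)" by (rule finite_classifier_points[OF C fl wp cl])
  have "Om \<in> Ob C" using cl hom_objects[OF C] unfolding subobject_classifier_def by blast
  moreover have "iso C m" if "m \<in> hom C Om Om" "monic C m" for m
    using monic_iso_if_points_lift[OF C wp cl \<open>monic C m\<close> that(1)]
      monic_endo_surj_on_points[OF C \<open>monic C m\<close> that(1) fin] by blast
  ultimately show ?thesis unfolding finite_object_def by blast
qed

section \<open>The comparison transformation\<close>

lemma nat_trans_to_identity_component:
  assumes \<iota>: "nat_trans C D FO FA GO GA \<iota>" and \<iota>_Om: "\<iota> Om = Ide D (FO Om)"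
    and D: "category D" and F: "is_functor C D FO FA" and h: "h \<in> hom C P Om"
  shows "FA h = Cmp D (GA h) (\<iota> P)"
  using nat_trans_naturality[OF \<iota> h] \<iota>_Om comp_ide_left[OF D functor_hom[OF F h]] by simp

lemma nat_trans_pair_factors_through_diagonal:
  assumes S: "category S" and S': "category S'"
    and \<sigma>: "is_functor S S' \<sigma>O \<sigma>A"
    and \<tau>: "is_functor S S' \<tau>O \<tau>A" "preserves_finite_limits S S' \<tau>O \<tau>A"
    and \<iota>: "nat_trans S S' \<sigma>O \<sigma>A \<tau>O \<tau>A \<iota>"
    and pr: "product S X X P \<pi>1 \<pi>2" and d: "d \<in> hom S X P"
    and d1: "Cmp S \<pi>1 d = Ide S X" and d2: "Cmp S \<pi>2 d = Ide S X"
    and w: "w \<in> hom S' A (\<sigma>O P)" and f: "f \<in> hom S' A (\<sigma>O X)"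
    and w1: "Cmp S' (\<iota> X) (Cmp S' (\<sigma>A \<pi>1) w) = Cmp S' (\<iota> X) f"
    and w2: "Cmp S' (\<iota> X) (Cmp S' (\<sigma>A \<pi>2) w) = Cmp S' (\<iota> X) f"
  shows "Cmp S' (\<iota> P) w = Cmp S' (\<tau>A d) (Cmp S' (\<iota> X) f)"
proof -
  have X: "X \<in> Ob S" and P: "P \<in> Ob S" using hom_objects[OF S d] by auto
  have \<iota>X: "\<iota> X \<in> hom S' (\<sigma>O X) (\<tau>O X)" and \<iota>P: "\<iota> P \<in> hom S' (\<sigma>O P) (\<tau>O P)"
    using nat_trans_hom[OF \<iota>] X P by auto
  have \<iota>f: "Cmp S' (\<iota> X) f \<in> hom S' A (\<tau>O X)" using comp_in_hom[OF S' f \<iota>X] .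
  have \<tau>d: "\<tau>A d \<in> hom S' (\<tau>O X) (\<tau>O P)" using functor_hom[OF \<tau>(1) d] .
  have proj: "Cmp S' (\<tau>A \<pi>) (Cmp S' (\<iota> P) w) = Cmp S' (\<tau>A \<pi>) (Cmp S' (\<tau>A d) (Cmp S' (\<iota> X) f))"
    if \<pi>: "\<pi> \<in> hom S P X" and \<pi>d: "Cmp S \<pi> d = Ide S X"
      and w\<pi>: "Cmp S' (\<iota> X) (Cmp S' (\<sigma>A \<pi>) w) = Cmp S' (\<iota> X) f" for \<pi>
  proof -
    have \<tau>\<pi>: "\<tau>A \<pi> \<in> hom S' (\<tau>O P) (\<tau>O X)" using functor_hom[OF \<tau>(1) \<pi>] .
    have "Cmp S' (\<tau>A \<pi>) (Cmp S' (\<iota> P) w) = Cmp S' (Cmp S' (\<iota> X) (\<sigma>A \<pi>)) w"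
      using comp_assoc[OF S' w \<iota>P \<tau>\<pi>] nat_trans_naturality[OF \<iota> \<pi>] by simp
    also have "\<dots> = Cmp S' (\<iota> X) f"
      using comp_assoc[OF S' w functor_hom[OF \<sigma> \<pi>] \<iota>X] w\<pi> by simp
    also have "\<dots> = Cmp S' (\<tau>A (Cmp S \<pi> d)) (Cmp S' (\<iota> X) f)"
      using \<pi>d functor_ide[OF \<tau>(1) X] comp_ide_left[OF S' \<iota>f] by simp
    also have "\<dots> = Cmp S' (\<tau>A \<pi>) (Cmp S' (\<tau>A d) (Cmp S' (\<iota> X) f))"
      using functor_comp[OF \<tau>(1) d \<pi>] comp_assoc[OF S' \<iota>f \<tau>d \<tau>\<pi>] by simp
    finally show ?thesis .
  qed
  show ?thesis
    using product_arrow_eqI[OF S' preserves_product[OF \<tau>(2) pr] comp_in_hom[OF S' w \<iota>P]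
        comp_in_hom[OF S' \<iota>f \<tau>d]]
      proj[OF _ d1 w1] proj[OF _ d2 w2] product_projections[OF pr] by blast
qed

lemma component_monic_if_classifier_component_ide:
  assumes S: "category S" and S': "category S'" and fl: "has_finite_limits S"
    and cl: "subobject_classifier S One Om tr"
    and \<sigma>: "is_functor S S' \<sigma>O \<sigma>A" "preserves_finite_limits S S' \<sigma>O \<sigma>A"
    and \<tau>: "is_functor S S' \<tau>O \<tau>A" "preserves_finite_limits S S' \<tau>O \<tau>A"
    and \<iota>: "nat_trans S S' \<sigma>O \<sigma>A \<tau>O \<tau>A \<iota>" and \<iota>_Om: "\<iota> Om = Ide S' (\<sigma>O Om)"
    and X: "X \<in> Ob S"
  shows "monic S' (\<iota> X)"
proof -
  obtain P \<pi>1 \<pi>2 d \<chi> b where pr: "product S X X P \<pi>1 \<pi>2" and d: "d \<in> hom S X P"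
      "Cmp S \<pi>1 d = Ide S X" "Cmp S \<pi>2 d = Ide S X" and \<chi>: "\<chi> \<in> hom S P Om"
      and b: "b \<in> hom S P One" and eq: "equalizer S \<chi> (Cmp S tr b) X d"
    using diagonal_equalizer[OF S fl cl X] .
  have trb: "Cmp S tr b \<in> hom S P Om"
    using comp_in_hom[OF S b] cl unfolding subobject_classifier_def by blast
  have P: "P \<in> Ob S" using hom_objects[OF S d(1)] by blast
  have \<iota>X: "\<iota> X \<in> hom S' (\<sigma>O X) (\<tau>O X)" and \<iota>P: "\<iota> P \<in> hom S' (\<sigma>O P) (\<tau>O P)"
    using nat_trans_hom[OF \<iota>] X P by auto
  have \<sigma>d: "\<sigma>A d \<in> hom S' (\<sigma>O X) (\<sigma>O P)" using functor_hom[OF \<sigma>(1) d(1)] .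
  show ?thesis
  proof (rule monicI[OF \<iota>X])
    fix A f g assume f: "f \<in> hom S' A (\<sigma>O X)" and g: "g \<in> hom S' A (\<sigma>O X)"
      and fg: "Cmp S' (\<iota> X) f = Cmp S' (\<iota> X) g"
    obtain w where w: "w \<in> hom S' A (\<sigma>O P)" "Cmp S' (\<sigma>A \<pi>1) w = f" "Cmp S' (\<sigma>A \<pi>2) w = g"
      using product_pair[OF preserves_product[OF \<sigma>(2) pr] f g] by blast
    have \<iota>w: "Cmp S' (\<iota> P) w = Cmp S' (\<tau>A d) (Cmp S' (\<iota> X) f)"
      using nat_trans_pair_factors_through_diagonal[OF S S' \<sigma>(1) \<tau> \<iota> pr d w(1) f] w(2,3) fg
      by simp
    have \<sigma>h: "Cmp S' (\<sigma>A h) w = Cmp S' (\<tau>A (Cmp S h d)) (Cmp S' (\<iota> X) f)"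
      if h: "h \<in> hom S P Om" for h
    proof -
      have \<tau>h: "\<tau>A h \<in> hom S' (\<tau>O P) (\<tau>O Om)" using functor_hom[OF \<tau>(1) h] .
      have "Cmp S' (\<sigma>A h) w = Cmp S' (\<tau>A h) (Cmp S' (\<iota> P) w)"
        using nat_trans_to_identity_component[OF \<iota> \<iota>_Om S' \<sigma>(1) h]
          comp_assoc[OF S' w(1) \<iota>P \<tau>h] by simp
      then show ?thesis
        using \<iota>w comp_assoc[OF S' comp_in_hom[OF S' f \<iota>X] functor_hom[OF \<tau>(1) d(1)] \<tau>h]
          functor_comp[OF \<tau>(1) d(1) h] by simp
    qed
    have "Cmp S' (\<sigma>A \<chi>) w = Cmp S' (\<sigma>A (Cmp S tr b)) w"
      using \<sigma>h[OF \<chi>] \<sigma>h[OF trb] equalizer_arrow[OF eq] by simp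
    moreover have "w \<in> hom S' A (Dm S' (\<sigma>A \<chi>))"
      using w(1) functor_hom[OF \<sigma>(1) \<chi>] by (simp add: hom_def)
    ultimately obtain z where z: "z \<in> hom S' A (\<sigma>O X)" "Cmp S' (\<sigma>A d) z = w"
      using equalizer_factor[OF preserves_equalizer[OF \<sigma>(2) eq]] by blast
    have "Cmp S' (\<sigma>A \<pi>) w = z" if \<pi>: "\<pi> \<in> hom S P X" "Cmp S \<pi> d = Ide S X" for \<pi>
      using z comp_assoc[OF S' z(1) \<sigma>d functor_hom[OF \<sigma>(1) \<pi>(1)]] functor_comp[OF \<sigma>(1) d(1) \<pi>(1)]
        \<pi>(2) functor_ide[OF \<sigma>(1) X] comp_ide_left[OF S' z(1)] by simp
    then show "f = g" using w(2,3) d(2,3) product_projections[OF pr] by metis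
  qed
qed

theorem mainTheorem3:
  assumes "duplicated_category_of_sets S S' \<sigma>O \<sigma>A \<tau>O \<tau>A \<iota>"
    and "X \<in> Ob S"
  shows "monic S' (\<iota> X)"
proof -
  have ES: "ETCS S" and ES': "ETCS S'"
    and \<sigma>: "is_functor S S' \<sigma>O \<sigma>A" "preserves_finite_limits S S' \<sigma>O \<sigma>A"
    and \<tau>: "is_functor S S' \<tau>O \<tau>A" "preserves_finite_limits S S' \<tau>O \<tau>A"
    and \<iota>: "nat_trans S S' \<sigma>O \<sigma>A \<tau>O \<tau>A \<iota>"
    and fin: "\<And>Y. finite_object S Y \<Longrightarrow> \<iota> Y = Ide S' (\<sigma>O Y)"
    using assms(1) unfolding duplicated_category_of_sets_def by auto
  have S: "category S" and fl: "has_finite_limits S" and S': "category S'"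
    using ES ES' unfolding ETCS_def topos_def by auto
  obtain One Om tr where cl: "subobject_classifier S One Om tr"
    using ES unfolding ETCS_def topos_def by blast
  show ?thesis
    using component_monic_if_classifier_component_ide[OF S S' fl cl \<sigma> \<tau> \<iota>
        fin[OF classifier_finite_object[OF ES cl]] assms(2)] .
qed

end
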